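(* For any finite simple graph $X$ and any $\pi\in S_X$, $\mathrm{Fix}(\mathbf{F}^\uparrow)=\mathrm{Fix}(\mathbf{F}^\downarrow)=\mathrm{Fix}(\mathbf{F}^\updownarrow)=\mathrm{Fix}(\mathbf{F}^\uparrow_\pi)=\mathrm{Fix}(\mathbf{F}^\downarrow_\pi)=\mathrm{Fix}(\mathbf{F}^\updownarrow_\pi)$, where $\mathrm{Fix}(\phi)$ denotes the set of fixed points of $\phi$.
   Context: Let $X$ be a finite simple graph with vertices $1,\dots,n$; $d(v)$ is the degree of $v$ and $n[v]$ the closed neighborhood of $v$. An extended vertex state is $s_v=(x_v,k_v)\in\{0,1\}\times\{1,\dots,d(v)+1\}$; $\mathcal{S}$ is the product of these sets. Let $\sigma(x[v])=|\{u\in n[v]:x_u=1\}|$. All vertex functions set $x_v'=1$ iff $\sigma(x[v])\ge k_v$ (else $0$). Increasing ($\uparrow$): $k_v'=k_v+1$ if $x_v=0$ and $\sigma(x[v])\ge k_v$, else $k_v$. Decreasing ($\downarrow$): $k_v'=k_v-1$ if $x_v=1$ and $\sigma(x[v])<k_v$, else $k_v$. Mixed ($\updownarrow$): both of these changes, $k_v$ unchanged otherwise. The local map $F^\star_v$ updates only coordinate $v$; for a permutation $\pi=(\pi_1,\dots,\pi_n)$, the SDS map is $\mathbf{F}^\star_\pi=F^\star_{\pi_n}\circ\cdots\circ F^\star_{\pi_1}$, and the GCA map $\mathbf{F}^\star$ applies the vertex function at all vertices simultaneously. *)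

theory Defs
  imports Main
begin

definition simple_graph :: "nat \<Rightarrow> (nat \<Rightarrow> nat \<Rightarrow> bool) \<Rightarrow> bool" where
  "simple_graph n E \<longleftrightarrow> (\<forall>u v. E u v \<longrightarrow> E v u) \<and> (\<forall>v. \<not> E v v)
      \<and> (\<forall>u v. E u v \<longrightarrow> u \<in> {1..n} \<and> v \<in> {1..n})"

definition nbhd :: "nat \<Rightarrow> (nat \<Rightarrow> nat \<Rightarrow> bool) \<Rightarrow> nat \<Rightarrow> nat set" where
  "nbhd n E v = {u \<in> {1..n}. E v u}"

definition deg :: "nat \<Rightarrow> (nat \<Rightarrow> nat \<Rightarrow> bool) \<Rightarrow> nat \<Rightarrow> nat" where
  "deg n E v = card (nbhd n E v)"

definition cnbhd :: "nat \<Rightarrow> (nat \<Rightarrow> nat \<Rightarrow> bool) \<Rightarrow> nat \<Rightarrow> nat set" where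
  "cnbhd n E v = insert v (nbhd n E v)"

(* extended states: s v = (x_v, k_v); x_v = True means 1 *)
type_synonym state = "nat \<Rightarrow> bool \<times> nat"

definition states :: "nat \<Rightarrow> (nat \<Rightarrow> nat \<Rightarrow> bool) \<Rightarrow> state set" where
  "states n E = {s. (\<forall>v\<in>{1..n}. 1 \<le> snd (s v) \<and> snd (s v) \<le> deg n E v + 1)
                    \<and> (\<forall>v. v \<notin> {1..n} \<longrightarrow> s v = (False, 1))}"

definition sigma :: "nat \<Rightarrow> (nat \<Rightarrow> nat \<Rightarrow> bool) \<Rightarrow> state \<Rightarrow> nat \<Rightarrow> nat" where
  "sigma n E s v = card {u \<in> cnbhd n E v. fst (s u)}"

datatype mode = Inc | Dec | Mix

definition vfun :: "mode \<Rightarrow> nat \<Rightarrow> (nat \<Rightarrow> nat \<Rightarrow> bool) \<Rightarrow> state \<Rightarrow> nat \<Rightarrow> bool \<times> nat" where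
  "vfun m n E s v =
     (let x = fst (s v); k = snd (s v); on = (k \<le> sigma n E s v);
          up = (\<not> x \<and> on); down = (x \<and> \<not> on);
          k' = (case m of
                  Inc \<Rightarrow> (if up then k + 1 else k)
                | Dec \<Rightarrow> (if down then k - 1 else k)
                | Mix \<Rightarrow> (if up then k + 1 else if down then k - 1 else k))
      in (on, k'))"

definition local_map :: "mode \<Rightarrow> nat \<Rightarrow> (nat \<Rightarrow> nat \<Rightarrow> bool) \<Rightarrow> nat \<Rightarrow> state \<Rightarrow> state" where
  "local_map m n E v s = s(v := vfun m n E s v)"

(* SDS map F_\<pi> = F_{\<pi>_n} \<circ> ... \<circ> F_{\<pi>_1}: apply the local maps in list order *)
definition sds_map :: "mode \<Rightarrow> nat \<Rightarrow> (nat \<Rightarrow> nat \<Rightarrow> bool) \<Rightarrow> nat list \<Rightarrow> state \<Rightarrow> state" where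
  "sds_map m n E \<pi> s = fold (local_map m n E) \<pi> s"

definition gca_map :: "mode \<Rightarrow> nat \<Rightarrow> (nat \<Rightarrow> nat \<Rightarrow> bool) \<Rightarrow> state \<Rightarrow> state" where
  "gca_map m n E s = (\<lambda>v. if v \<in> {1..n} then vfun m n E s v else s v)"

definition is_perm :: "nat \<Rightarrow> nat list \<Rightarrow> bool" where
  "is_perm n \<pi> \<longleftrightarrow> distinct \<pi> \<and> set \<pi> = {1..n}"

definition Fix :: "nat \<Rightarrow> (nat \<Rightarrow> nat \<Rightarrow> bool) \<Rightarrow> (state \<Rightarrow> state) \<Rightarrow> state set" where
  "Fix n E \<phi> = {s \<in> states n E. \<phi> s = s}"

end

theory Submission
  imports Defs
begin

(* A state is fixed by a vertex function exactly when x_v already equals the threshold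
   output \<sigma>(x[v]) \<ge> k_v: in all three modes k_v changes only when x_v does.  This
   condition does not mention the mode, and it characterises the fixed points of both
   update schemes: synchronously trivially, and sequentially along a permutation because
   the first vertex whose state changes is never visited again. *)

definition threshold_consistent :: "nat \<Rightarrow> (nat \<Rightarrow> nat \<Rightarrow> bool) \<Rightarrow> state \<Rightarrow> nat \<Rightarrow> bool" where
  "threshold_consistent n E s v \<longleftrightarrow> (snd (s v) \<le> sigma n E s v) = fst (s v)"

lemma vfun_eq_self_iff: "vfun m n E s v = s v \<longleftrightarrow> threshold_consistent n E s v"
  by (cases "s v"; cases m) (auto simp: vfun_def threshold_consistent_def Let_def)

lemma fold_local_map_notin:
  "v \<notin> set xs \<Longrightarrow> fold (local_map m n E) xs s v = s v"
  by (induction xs arbitrary: s) (auto simp: local_map_def)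

lemma fold_local_map_eq_self_iff:
  assumes "distinct xs"
  shows "fold (local_map m n E) xs s = s \<longleftrightarrow> (\<forall>v\<in>set xs. vfun m n E s v = s v)"
  using assms
proof (induction xs)
  case Nil
  then show ?case by simp
next
  case (Cons a xs)
  show ?case
  proof (cases "vfun m n E s a = s a")
    case True
    then have "local_map m n E a s = s" by (simp add: local_map_def)
    with Cons show ?thesis by (simp add: True)
  next
    case False
    have "fold (local_map m n E) xs (local_map m n E a s) a = local_map m n E a s a"
      using Cons.prems by (intro fold_local_map_notin) auto
    also have "\<dots> \<noteq> s a" using False by (simp add: local_map_def)
    finally show ?thesis using False by auto
  qed
qed

lemma Fix_gca_map:
  "Fix n E (gca_map m n E) = {s \<in> states n E. \<forall>v\<in>{1..n}. threshold_consistent n E s v}"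
  by (auto simp: Fix_def gca_map_def fun_eq_iff vfun_eq_self_iff)

lemma Fix_sds_map:
  assumes "is_perm n \<pi>"
  shows "Fix n E (sds_map m n E \<pi>) = {s \<in> states n E. \<forall>v\<in>{1..n}. threshold_consistent n E s v}"
  using assms
  by (simp add: Fix_def sds_map_def is_perm_def fold_local_map_eq_self_iff vfun_eq_self_iff)

theorem proposition4p1:
  fixes n :: nat and E :: "nat \<Rightarrow> nat \<Rightarrow> bool" and \<pi> :: "nat list"
  assumes "simple_graph n E" and "is_perm n \<pi>"
  shows "Fix n E (gca_map Inc n E) = Fix n E (gca_map Dec n E)
       \<and> Fix n E (gca_map Dec n E) = Fix n E (gca_map Mix n E)
       \<and> Fix n E (gca_map Mix n E) = Fix n E (sds_map Inc n E \<pi>)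
       \<and> Fix n E (sds_map Inc n E \<pi>) = Fix n E (sds_map Dec n E \<pi>)
       \<and> Fix n E (sds_map Dec n E \<pi>) = Fix n E (sds_map Mix n E \<pi>)"
  by (simp add: Fix_gca_map Fix_sds_map[OF assms(2)])

end
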